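(* Let $0\le k\le n$, let $\bar g\in G_k$ have type $\boldsymbol\lambda\in\mathcal{P}(\Phi)$, and let $g=\begin{bmatrix}\bar g&0\\0&I_{n-k}\end{bmatrix}\in G_n$. Suppose all parts of the partition $\boldsymbol\lambda^e=\boldsymbol\lambda(t-1)$ are strictly bigger than $1$. Then an $n\times n$ matrix $\begin{bmatrix}A&B\\C&D\end{bmatrix}$ over $\mathbb F_q$, written in $(k\,|\,n-k)$-block form, which commutes with $g$ is invertible if and only if both $A$ and $D$ are invertible.
   Context: $q$ is a prime power, $G_n=GL_n(\mathbb F_q)$. $\Phi$ is the set of monic irreducible polynomials in $\mathbb F_q[t]$ other than $t$; $\mathcal{P}(\Phi)$ is the set of finitely supported maps from $\Phi$ to partitions. The type of $\bar g\in G_k$ is the unique $\boldsymbol\lambda\in\mathcal{P}(\Phi)$ such that $\mathbb F_q^k$, viewed as an $\mathbb F_q[t]$-module with $t$ acting by $\bar g$, is isomorphic to $\bigoplus_{f,i}\mathbb F_q[t]/(f^{\boldsymbol\lambda_i(f)})$, where $\boldsymbol\lambda(f)=(\boldsymbol\lambda_1(f),\boldsymbol\lambda_2(f),\dots)$. *)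

theory Defs
  imports "Jordan_Normal_Form.Matrix" "HOL-Computational_Algebra.Polynomial"
    "HOL-Computational_Algebra.Factorial_Ring" "HOL-Library.Multiset"
begin

definition Phi :: "'a::field poly set" where
  "Phi = {f. lead_coeff f = 1 \<and> irreducible f \<and> f \<noteq> [:0, 1:]}"

definition is_partition :: "nat list \<Rightarrow> bool" where
  "is_partition ls \<longleftrightarrow> sorted_wrt (\<ge>) ls \<and> (\<forall>x\<in>set ls. 0 < x)"

text \<open>Companion matrix of a monic polynomial p: the matrix of multiplication by t
  on F[t]/(p) in the basis 1, t, ..., t^(d-1).\<close>
definition companion_mat :: "'a::field poly \<Rightarrow> 'a mat" where
  "companion_mat p = (let d = degree p in
     mat d d (\<lambda>(i, j). if j + 1 < d then (if i = j + 1 then 1 else 0)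
                      else - coeff p i))"

text \<open>gbar (a k x k matrix) has type lam: lam is a finitely supported map from Phi to
  partitions and F^k, viewed as F[t]-module with t acting by gbar, is isomorphic to
  the direct sum of the F[t]/(f^(lam f ! i)); equivalently (in matrix language)
  gbar is similar to the block diagonal matrix of the companion matrices of these
  f^(lam f ! i), taken in some order.\<close>
definition has_type :: "nat \<Rightarrow> 'a::field mat \<Rightarrow> ('a poly \<Rightarrow> nat list) \<Rightarrow> bool" where
  "has_type k gbar lam \<longleftrightarrow>
     gbar \<in> carrier_mat k k \<and>
     finite {f. lam f \<noteq> []} \<and>
     (\<forall>f. f \<notin> Phi \<longrightarrow> lam f = []) \<and>
     (\<forall>f. is_partition (lam f)) \<and>
     (\<exists>bs :: ('a poly \<times> nat) list.
        mset bs = (\<Sum>f\<in>{f. lam f \<noteq> []}. mset (map (\<lambda>m. (f, m)) (lam f))) \<and>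
        similar_mat gbar (diag_block_mat (map (\<lambda>(f, m). companion_mat (f ^ m)) bs)))"

end

theory Submission
  imports Defs "Jordan_Normal_Form.Determinant"
begin

text \<open>
  Write \<open>G = diag(gbar, 1)\<close> and \<open>M = [A B; C D]\<close>. Commuting with \<open>G\<close> means \<open>A gbar = gbar A\<close>,
  \<open>gbar B = B\<close> and \<open>C gbar = C\<close>: the columns of \<open>B\<close> are fixed vectors of \<open>gbar\<close> and the rows
  of \<open>C\<close> are fixed row vectors. The hypothesis on \<open>lam (t - 1)\<close> says that \<open>gbar\<close> has no Jordan
  block of size one for the eigenvalue 1; then every fixed row vector annihilates every fixed
  vector (on a companion block of \<open>f^m\<close> this amounts to 1 not being a simple root of \<open>f^m\<close>).
  Since \<open>X B\<close> again consists of fixed vectors whenever \<open>X\<close> commutes with \<open>gbar\<close>, we get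
  \<open>C X B = 0\<close> for all such \<open>X\<close>. If \<open>A\<close> and \<open>D\<close> are invertible, the Schur complement
  \<open>D - C A\<^sup>-\<^sup>1 B\<close> is \<open>D\<close>, so \<open>det M = det A det D \<noteq> 0\<close>. Conversely, the inverse
  \<open>[P Q; R S]\<close> of \<open>M\<close> also commutes with \<open>G\<close>, so \<open>R B = 0 = C Q\<close>; then \<open>D S = 1\<close>, and
  \<open>A P = 1 - B R\<close> with \<open>(B R)\<^sup>2 = 0\<close> shows that \<open>A\<close> is invertible.
\<close>

text \<open>Equivalently, \<open>ker (g - 1) \<subseteq> im (g - 1)\<close>.\<close>

definition fixed_spaces_orthogonal :: "'a::field mat \<Rightarrow> bool" where
  "fixed_spaces_orthogonal g \<longleftrightarrow>
     (\<forall>x \<in> carrier_vec (dim_row g). \<forall>y \<in> carrier_vec (dim_row g).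
        g *\<^sub>v x = x \<longrightarrow> transpose_mat g *\<^sub>v y = y \<longrightarrow> y \<bullet> x = 0)"

lemma fixed_spaces_orthogonalD:
  assumes "fixed_spaces_orthogonal g" "g \<in> carrier_mat n n"
    and "x \<in> carrier_vec n" "y \<in> carrier_vec n"
    and "g *\<^sub>v x = x" "transpose_mat g *\<^sub>v y = y"
  shows "y \<bullet> x = 0"
  using assms unfolding fixed_spaces_orthogonal_def by auto

lemma fixed_spaces_orthogonal_similar:
  assumes "similar_mat g J" "fixed_spaces_orthogonal J"
  shows "fixed_spaces_orthogonal g"
proof -
  obtain n P Q where "{g, J, P, Q} \<subseteq> carrier_mat n n"
    and PQ: "P * Q = 1\<^sub>m n" and QP: "Q * P = 1\<^sub>m n" and g: "g = P * J * Q"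
    using similar_matD[OF assms(1)] by blast
  then have carr: "g \<in> carrier_mat n n" "J \<in> carrier_mat n n" "P \<in> carrier_mat n n"
    "Q \<in> carrier_mat n n" by auto
  have QJ: "Q * g = J * Q"
  proof -
    have "Q * g = (Q * P) * J * Q"
      using carr by (simp add: g assoc_mult_mat[of _ n n _ n _ n])
    then show ?thesis using QP carr by simp
  qed
  have JP: "g * P = P * J"
  proof -
    have "g * P = P * J * (Q * P)"
      using carr by (simp add: g assoc_mult_mat[of _ n n _ n _ n])
    then show ?thesis using QP carr by simp
  qed
  show ?thesis unfolding fixed_spaces_orthogonal_def
  proof (intro ballI impI)
    fix x y assume "x \<in> carrier_vec (dim_row g)" "y \<in> carrier_vec (dim_row g)"
      and gx: "g *\<^sub>v x = x" and gy: "transpose_mat g *\<^sub>v y = y"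
    then have xy: "x \<in> carrier_vec n" "y \<in> carrier_vec n" using carr by auto
    have "J *\<^sub>v (Q *\<^sub>v x) = (Q * g) *\<^sub>v x"
      using carr xy by (simp add: QJ)
    then have "J *\<^sub>v (Q *\<^sub>v x) = Q *\<^sub>v x" using carr xy gx by simp
    moreover have "transpose_mat J *\<^sub>v (transpose_mat P *\<^sub>v y) = transpose_mat P *\<^sub>v y"
    proof -
      have "transpose_mat J *\<^sub>v (transpose_mat P *\<^sub>v y) = transpose_mat (P * J) *\<^sub>v y"
        using carr xy by (simp add: transpose_mult[of P n n J n])
      also have "\<dots> = transpose_mat P *\<^sub>v (transpose_mat g *\<^sub>v y)"
        using carr xy by (simp flip: JP add: transpose_mult[of g n n P n])
      finally show ?thesis using gy by simp
    qed
    ultimately have "(transpose_mat P *\<^sub>v y) \<bullet> (Q *\<^sub>v x) = 0"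
      using assms(2) carr xy by (intro fixed_spaces_orthogonalD[of J n]) auto
    moreover have "(transpose_mat P *\<^sub>v y) \<bullet> (Q *\<^sub>v x) = y \<bullet> x"
      using carr xy PQ transpose_vec_mult_scalar[of P n n "Q *\<^sub>v x" y]
        assoc_mult_mat_vec[of P n n Q n x] by simp
    ultimately show "y \<bullet> x = 0" by simp
  qed
qed

lemma four_block_diag_fixed_vec:
  assumes "A \<in> carrier_mat a a" "B \<in> carrier_mat b b"
    and "x1 \<in> carrier_vec a" "x2 \<in> carrier_vec b"
    and "four_block_mat A (0\<^sub>m a b) (0\<^sub>m b a) B *\<^sub>v (x1 @\<^sub>v x2) = x1 @\<^sub>v x2"
  shows "A *\<^sub>v x1 = x1" "B *\<^sub>v x2 = x2"
  using assms append_vec_eq[of "A *\<^sub>v x1" a x1] by (simp_all add: mult_mat_vec_split)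

lemma fixed_spaces_orthogonal_four_block_diag:
  assumes A: "A \<in> carrier_mat a a" and B: "B \<in> carrier_mat b b"
    and "fixed_spaces_orthogonal A" "fixed_spaces_orthogonal B"
  shows "fixed_spaces_orthogonal (four_block_mat A (0\<^sub>m a b) (0\<^sub>m b a) B)"
  unfolding fixed_spaces_orthogonal_def
proof (intro ballI impI)
  let ?M = "four_block_mat A (0\<^sub>m a b) (0\<^sub>m b a) B"
  fix x y assume "x \<in> carrier_vec (dim_row ?M)" "y \<in> carrier_vec (dim_row ?M)"
    and Mx: "?M *\<^sub>v x = x" and My: "transpose_mat ?M *\<^sub>v y = y"
  then have x: "x \<in> carrier_vec (a + b)" and y: "y \<in> carrier_vec (a + b)" using A B by auto
  define x1 where "x1 = vec_first x a"
  define x2 where "x2 = vec_last x b"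
  define y1 where "y1 = vec_first y a"
  define y2 where "y2 = vec_last y b"
  have xy: "x = x1 @\<^sub>v x2" "y = y1 @\<^sub>v y2"
    using x y by (simp_all add: x1_def x2_def y1_def y2_def)
  have carr: "x1 \<in> carrier_vec a" "x2 \<in> carrier_vec b" "y1 \<in> carrier_vec a" "y2 \<in> carrier_vec b"
    by (simp_all add: x1_def x2_def y1_def y2_def)
  have MT: "transpose_mat ?M = four_block_mat (transpose_mat A) (0\<^sub>m a b) (0\<^sub>m b a) (transpose_mat B)"
    using transpose_four_block_mat[OF A _ _ B] by simp
  have "A *\<^sub>v x1 = x1" "B *\<^sub>v x2 = x2"
    using four_block_diag_fixed_vec[OF A B carr(1,2)] Mx by (simp_all add: xy)
  moreover have "transpose_mat A *\<^sub>v y1 = y1" "transpose_mat B *\<^sub>v y2 = y2"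
    using four_block_diag_fixed_vec[of "transpose_mat A" a "transpose_mat B" b, OF _ _ carr(3,4)]
      My A B by (simp_all add: xy MT)
  ultimately have "y1 \<bullet> x1 = 0" "y2 \<bullet> x2 = 0"
    using fixed_spaces_orthogonalD[OF assms(3) A carr(1,3)] fixed_spaces_orthogonalD[OF assms(4) B carr(2,4)]
    by simp_all
  then show "y \<bullet> x = 0" using carr by (simp add: xy scalar_prod_append)
qed

lemma fixed_spaces_orthogonal_diag_block_mat:
  assumes "\<And>A. A \<in> set As \<Longrightarrow> square_mat A \<and> fixed_spaces_orthogonal A"
  shows "fixed_spaces_orthogonal (diag_block_mat As)"
  using assms
proof (induction As)
  case Nil
  then show ?case by (auto simp: fixed_spaces_orthogonal_def scalar_prod_def)
next
  case (Cons A As)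
  let ?a = "dim_row A" and ?b = "dim_row (diag_block_mat As)"
  have "square_mat A" and orth_A: "fixed_spaces_orthogonal A"
    using Cons.prems[of A] by simp_all
  then have A: "A \<in> carrier_mat ?a ?a" by (auto simp: square_mat.simps)
  have "square_mat (diag_block_mat As)"
    by (rule diag_block_mat_square) (use Cons.prems in auto)
  then have B: "diag_block_mat As \<in> carrier_mat ?b ?b" by (auto simp: square_mat.simps)
  have "diag_block_mat (A # As) = four_block_mat A (0\<^sub>m ?a ?b) (0\<^sub>m ?b ?a) (diag_block_mat As)"
    using A B unfolding diag_block_mat.simps Let_def by (metis carrier_matD(2))
  moreover have "fixed_spaces_orthogonal (diag_block_mat As)"
    by (rule Cons.IH) (use Cons.prems in auto)
  ultimately show ?case
    using fixed_spaces_orthogonal_four_block_diag[OF A B orth_A] by simp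
qed

lemma companion_mat_carrier: "companion_mat p \<in> carrier_mat (degree p) (degree p)"
  by (simp add: companion_mat_def Let_def)

lemma companion_mat_mult_vec_nth:
  assumes p: "degree p = Suc m" and x: "x \<in> carrier_vec (Suc m)" and i: "i < Suc m"
  shows "(companion_mat p *\<^sub>v x) $ i = (if i = 0 then 0 else x $ (i - 1)) - coeff p i * x $ m"
proof -
  have "(companion_mat p *\<^sub>v x) $ i
      = (\<Sum>j<m. if i = Suc j then x $ j else 0) - coeff p i * x $ m"
    using p x i by (simp add: companion_mat_def mult_mat_vec_def scalar_prod_def
        atLeast0LessThan sum.lessThan_Suc if_distrib if_distribR)
  also have "(\<Sum>j<m. if i = Suc j then x $ j else 0) = (if i = 0 then 0 else x $ (i - 1))"
    using i by (cases i) (simp_all add: sum.delta')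
  finally show ?thesis .
qed

lemma transpose_companion_mat_mult_vec_nth:
  assumes p: "degree p = Suc m" and y: "y \<in> carrier_vec (Suc m)" and j: "j < Suc m"
  shows "(transpose_mat (companion_mat p) *\<^sub>v y) $ j
    = (if j < m then y $ Suc j else - (\<Sum>i<Suc m. coeff p i * y $ i))"
proof (cases "j < m")
  case True
  have "(transpose_mat (companion_mat p) *\<^sub>v y) $ j
      = (\<Sum>i<Suc m. (if i = Suc j then 1 else 0) * y $ i)"
    using True p y by (simp add: companion_mat_def mult_mat_vec_def scalar_prod_def atLeast0LessThan)
  also have "\<dots> = (\<Sum>i<Suc m. if i = Suc j then y $ i else 0)"
    by (rule sum.cong) simp_all
  finally show ?thesis using True by simp
next
  case False
  then show ?thesis
    using p y j by (simp add: companion_mat_def mult_mat_vec_def scalar_prod_def atLeast0LessThan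
        sum_negf)
qed

lemma poly_one_eq_sum_coeff:
  fixes p :: "'a::comm_semiring_1 poly"
  assumes "degree p < n"
  shows "poly p 1 = (\<Sum>i<n. coeff p i)"
proof -
  have "poly p 1 = (\<Sum>i\<le>degree p. coeff p i)" unfolding poly_altdef by simp
  also have "\<dots> = (\<Sum>i<n. coeff p i)"
    using assms by (intro sum.mono_neutral_left) (auto simp: coeff_eq_0)
  finally show ?thesis .
qed

lemma companion_mat_left_fixed_vec:
  assumes monic: "lead_coeff p = 1" and p: "degree p = Suc m"
    and y: "y \<in> carrier_vec (Suc m)" and fixed: "transpose_mat (companion_mat p) *\<^sub>v y = y"
  shows "\<And>i. i < Suc m \<Longrightarrow> y $ i = y $ 0" and "y $ 0 * poly p 1 = 0"
proof -
  have step: "y $ Suc j = y $ j" if "j < m" for j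
    using transpose_companion_mat_mult_vec_nth[OF p y, of j] that fixed by simp
  show const: "y $ i = y $ 0" if "i < Suc m" for i
    using that by (induction i) (simp_all add: step)
  have "y $ 0 = y $ m" using const[of m] by simp
  also have "\<dots> = - (\<Sum>i<Suc m. coeff p i * y $ i)"
    using transpose_companion_mat_mult_vec_nth[OF p y, of m] fixed by simp
  also have "\<dots> = - (\<Sum>i<Suc m. coeff p i * y $ 0)"
    using const by (metis (no_types, lifting) lessThan_iff sum.cong)
  also have "\<dots> = - ((\<Sum>i<Suc m. coeff p i) * y $ 0)"
    by (simp only: sum_distrib_right)
  finally have "y $ 0 * ((\<Sum>i<Suc m. coeff p i) + 1) = 0"
    by (simp add: algebra_simps eq_neg_iff_add_eq_0)
  moreover have "poly p 1 = (\<Sum>i<Suc m. coeff p i) + 1"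
    using poly_one_eq_sum_coeff[of p "Suc (Suc m)"] monic p by simp
  ultimately show "y $ 0 * poly p 1 = 0" by simp
qed

lemma companion_mat_fixed_vec_sum:
  assumes monic: "lead_coeff p = 1" and p: "degree p = Suc m"
    and x: "x \<in> carrier_vec (Suc m)" and fixed: "companion_mat p *\<^sub>v x = x"
  shows "(\<Sum>i<Suc m. x $ i) = x $ m * poly (pderiv p) 1"
proof -
  let ?s = "x $ m"
  have step: "x $ j = x $ Suc j + coeff p (Suc j) * ?s" if "j < m" for j
    using companion_mat_mult_vec_nth[OF p x, of "Suc j"] that fixed by simp
  have partial: "(\<Sum>i<Suc j. x $ i) = of_nat (Suc j) * x $ j + ?s * (\<Sum>i<Suc j. of_nat i * coeff p i)"
    if "j \<le> m" for j
    using that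
  proof (induction j)
    case (Suc j)
    then show ?case using step[of j] by (simp add: algebra_simps)
  qed simp
  have "degree (pderiv p) < Suc m"
    using p by (intro le_imp_less_Suc degree_le) (auto simp: coeff_pderiv coeff_eq_0)
  then have "poly (pderiv p) 1 = (\<Sum>i<Suc m. of_nat (Suc i) * coeff p (Suc i))"
    by (simp add: poly_one_eq_sum_coeff coeff_pderiv)
  also have "\<dots> = (\<Sum>i<Suc (Suc m). of_nat i * coeff p i)"
    by (subst sum.lessThan_Suc_shift) simp
  finally show ?thesis
    using partial[of m] monic p by (simp add: algebra_simps)
qed

lemma fixed_spaces_orthogonal_companion_mat:
  assumes monic: "lead_coeff p = 1" and root: "poly p 1 \<noteq> 0 \<or> poly (pderiv p) 1 = 0"
  shows "fixed_spaces_orthogonal (companion_mat p)"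
  unfolding fixed_spaces_orthogonal_def
proof (intro ballI impI)
  fix x y assume "x \<in> carrier_vec (dim_row (companion_mat p))" "y \<in> carrier_vec (dim_row (companion_mat p))"
    and fixed: "companion_mat p *\<^sub>v x = x" "transpose_mat (companion_mat p) *\<^sub>v y = y"
  then have x: "x \<in> carrier_vec (degree p)" and y: "y \<in> carrier_vec (degree p)"
    using companion_mat_carrier[of p] by auto
  show "y \<bullet> x = 0"
  proof (cases "degree p")
    case 0
    then show ?thesis using x by (simp add: scalar_prod_def)
  next
    case (Suc m)
    note const = companion_mat_left_fixed_vec[OF monic Suc _ fixed(2)]
    have "y \<bullet> x = (\<Sum>i<Suc m. y $ i * x $ i)"
      using x Suc by (simp add: scalar_prod_def atLeast0LessThan)
    also have "\<dots> = (\<Sum>i<Suc m. y $ 0 * x $ i)"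
      using const(1) y Suc by (metis (no_types, lifting) lessThan_iff sum.cong)
    also have "\<dots> = y $ 0 * (\<Sum>i<Suc m. x $ i)"
      by (simp only: sum_distrib_left)
    also have "\<dots> = y $ 0 * x $ m * poly (pderiv p) 1"
      using companion_mat_fixed_vec_sum[OF monic Suc _ fixed(1)] x Suc by simp
    finally show ?thesis using root const(2) y Suc by auto
  qed
qed

lemma monic_irreducible_root_eq_linear:
  fixes f :: "'a::field poly"
  assumes monic: "lead_coeff f = 1" and irr: "irreducible f" and root: "poly f a = 0"
  shows "f = [:-a, 1:]"
proof -
  obtain q where f: "f = [:-a, 1:] * q"
    using root by (auto simp: poly_eq_0_iff_dvd elim: dvdE)
  have "\<not> is_unit [:-a, 1:]" by (simp add: is_unit_iff_degree)
  then have "is_unit q" using irreducibleD[OF irr f] by blast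
  then have "degree q = 0" by (metis is_unit_iff_degree not_is_unit_0)
  moreover have "lead_coeff q = 1"
    using monic unfolding f lead_coeff_mult by simp
  ultimately have "q = 1" by (metis degree_0_id one_pCons)
  then show ?thesis by (simp add: f)
qed

lemma poly_pderiv_power_multiple_root:
  fixes f :: "'a::idom poly"
  assumes "poly f a = 0" and "2 \<le> m"
  shows "poly (pderiv (f ^ m)) a = 0"
proof -
  obtain k where "m = Suc (Suc k)" using assms(2) by (metis add_2_eq_Suc le_Suc_ex)
  then show ?thesis using assms(1) by (simp add: pderiv_power_Suc del: power_Suc)
qed

lemma has_type_fixed_spaces_orthogonal:
  assumes type: "has_type k g lam" and unipotent_parts: "\<forall>m\<in>set (lam [:-1, 1:]). m > 1"
  shows "fixed_spaces_orthogonal g"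
proof -
  obtain bs :: "('a poly \<times> nat) list" where
    fin: "finite {f. lam f \<noteq> []}" and Phi: "\<forall>f. f \<notin> Phi \<longrightarrow> lam f = []"
    and bs: "mset bs = (\<Sum>f\<in>{f. lam f \<noteq> []}. mset (map (\<lambda>m. (f, m)) (lam f)))"
    and sim: "similar_mat g (diag_block_mat (map (\<lambda>(f, m). companion_mat (f ^ m)) bs))"
    using type unfolding has_type_def by blast
  have block: "fixed_spaces_orthogonal (companion_mat (f ^ m))" if "(f, m) \<in> set bs" for f m
  proof -
    have "(f, m) \<in># mset bs" using that by simp
    then have "m \<in> set (lam f)" and "lam f \<noteq> []"
      unfolding bs set_mset_sum[OF fin] by auto
    then have f: "lead_coeff f = 1" "irreducible f" using Phi by (auto simp: Phi_def)
    have "poly (f ^ m) 1 \<noteq> 0 \<or> poly (pderiv (f ^ m)) 1 = 0"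
    proof (cases "poly f 1 = 0")
      case True
      then have "f = [:-1, 1:]" using monic_irreducible_root_eq_linear[OF f] by simp
      then have "2 \<le> m" using unipotent_parts \<open>m \<in> set (lam f)\<close> by fastforce
      then show ?thesis using poly_pderiv_power_multiple_root[OF True] by simp
    qed simp
    then show ?thesis using f by (intro fixed_spaces_orthogonal_companion_mat) (simp_all add: lead_coeff_power)
  qed
  show ?thesis
    by (rule fixed_spaces_orthogonal_similar[OF sim fixed_spaces_orthogonal_diag_block_mat])
      (auto simp: block square_mat.simps carrier_matD[OF companion_mat_carrier])
qed

lemma four_block_mat_inject:
  assumes "A \<in> carrier_mat r1 c1" "A' \<in> carrier_mat r1 c1" "B \<in> carrier_mat r1 c2" "B' \<in> carrier_mat r1 c2"
    "C \<in> carrier_mat r2 c1" "C' \<in> carrier_mat r2 c1" "D \<in> carrier_mat r2 c2" "D' \<in> carrier_mat r2 c2"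
  shows "four_block_mat A B C D = four_block_mat A' B' C' D' \<longleftrightarrow> A = A' \<and> B = B' \<and> C = C' \<and> D = D'"
proof
  assume eq: "four_block_mat A B C D = four_block_mat A' B' C' D'"
  have entry: "four_block_mat A B C D $$ (i, j) = four_block_mat A' B' C' D' $$ (i, j)" for i j
    by (simp only: eq)
  show "A = A' \<and> B = B' \<and> C = C' \<and> D = D'"
  proof (intro conjI eq_matI)
    show "A $$ (i, j) = A' $$ (i, j)" if "i < dim_row A'" "j < dim_col A'" for i j
      using entry[of i j] that assms by auto
    show "B $$ (i, j) = B' $$ (i, j)" if "i < dim_row B'" "j < dim_col B'" for i j
      using entry[of i "j + c1"] that assms by auto
    show "C $$ (i, j) = C' $$ (i, j)" if "i < dim_row C'" "j < dim_col C'" for i j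
      using entry[of "i + r1" j] that assms by auto
    show "D $$ (i, j) = D' $$ (i, j)" if "i < dim_row D'" "j < dim_col D'" for i j
      using entry[of "i + r1" "j + c1"] that assms by auto
  qed (use assms in auto)
qed simp

lemma commute_four_block_diag_one:
  fixes g A B C D :: "'a::semiring_1 mat"
  assumes g: "g \<in> carrier_mat k k" and A: "A \<in> carrier_mat k k" and B: "B \<in> carrier_mat k m"
    and C: "C \<in> carrier_mat m k" and D: "D \<in> carrier_mat m m"
    and comm: "four_block_mat A B C D * four_block_mat g (0\<^sub>m k m) (0\<^sub>m m k) (1\<^sub>m m)
      = four_block_mat g (0\<^sub>m k m) (0\<^sub>m m k) (1\<^sub>m m) * four_block_mat A B C D"
  shows "A * g = g * A" and "g * B = B" and "C * g = C"
proof -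
  have zero_one: "0\<^sub>m k m \<in> carrier_mat k m" "0\<^sub>m m k \<in> carrier_mat m k" "1\<^sub>m m \<in> carrier_mat m m"
    by simp_all
  have "four_block_mat A B C D * four_block_mat g (0\<^sub>m k m) (0\<^sub>m m k) (1\<^sub>m m)
      = four_block_mat (A * g) B (C * g) D"
    using g A B C D right_mult_one_mat[OF B] right_mult_one_mat[OF D]
    by (simp add: mult_four_block_mat[OF A B C D g zero_one])
  moreover have "four_block_mat g (0\<^sub>m k m) (0\<^sub>m m k) (1\<^sub>m m) * four_block_mat A B C D
      = four_block_mat (g * A) (g * B) C D"
    using g A B C D by (simp add: mult_four_block_mat[OF g zero_one A B C D])
  ultimately have "four_block_mat (A * g) B (C * g) D = four_block_mat (g * A) (g * B) C D"
    using comm by simp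
  then show "A * g = g * A" "g * B = B" "C * g = C"
    using four_block_mat_inject[of "A * g" k k "g * A" B m "g * B" "C * g" m C D D] g A B C D
    by auto
qed

lemma fixed_spaces_orthogonal_mult_eq_0:
  assumes orth: "fixed_spaces_orthogonal g" and g: "g \<in> carrier_mat k k"
    and B: "B \<in> carrier_mat k l" and C: "C \<in> carrier_mat l' k"
    and gB: "g * B = B" and Cg: "C * g = C"
  shows "C * B = 0\<^sub>m l' l"
proof (rule eq_matI)
  fix i j assume "i < dim_row (0\<^sub>m l' l)" "j < dim_col (0\<^sub>m l' l)"
  then have i: "i < l'" and j: "j < l" by simp_all
  have "g *\<^sub>v col B j = col B j"
    using col_mult2[OF g B j] gB by simp
  moreover have "transpose_mat g *\<^sub>v row C i = row C i"
    using col_mult2[of "transpose_mat g" k k "transpose_mat C" l' i] g C i Cg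
    by (simp add: transpose_mult[symmetric])
  ultimately have "row C i \<bullet> col B j = 0"
    using fixed_spaces_orthogonalD[OF orth g] B C i j by simp
  then show "(C * B) $$ (i, j) = 0\<^sub>m l' l $$ (i, j)" using B C i j by simp
qed (use B C in simp_all)

lemma invertible_matE:
  fixes A :: "'a::semiring_1 mat"
  assumes "invertible_mat A" and A: "A \<in> carrier_mat n n"
  obtains B where "B \<in> carrier_mat n n" "A * B = 1\<^sub>m n" "B * A = 1\<^sub>m n"
proof -
  obtain B where AB: "A * B = 1\<^sub>m n" and BA: "B * A = 1\<^sub>m (dim_row B)"
    using assms unfolding invertible_mat_def inverts_mat_def by auto
  then have "B \<in> carrier_mat n n"
    using A by (metis carrier_matD carrier_matI index_mult_mat(2,3) index_one_mat(2,3))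
  then show thesis using AB BA that by simp
qed

lemma invertible_mat_iff_det:
  fixes A :: "'a::field mat"
  assumes A: "A \<in> carrier_mat n n"
  shows "invertible_mat A \<longleftrightarrow> det A \<noteq> 0"
proof
  assume "invertible_mat A"
  then obtain B where B: "B \<in> carrier_mat n n" and "A * B = 1\<^sub>m n"
    using A by (elim invertible_matE)
  then have "det A * det B = 1" using det_mult[OF A B] by simp
  then show "det A \<noteq> 0" by auto
next
  assume "det A \<noteq> 0"
  then obtain B where "B \<in> carrier_mat n n" "A * B = 1\<^sub>m n" "B * A = 1\<^sub>m n"
    using det_non_zero_imp_unit[OF A, of undefined] unfolding Units_def ring_mat_simps by auto
  then show "invertible_mat A"
    using A unfolding invertible_mat_def inverts_mat_def by auto
qed

lemma invertible_mat_if_right_inverse: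
  fixes A :: "'a::field mat"
  assumes A: "A \<in> carrier_mat n n" and X: "X \<in> carrier_mat n n" and AX: "A * X = 1\<^sub>m n"
  shows "invertible_mat A"
proof -
  have "det A * det X = 1" using det_mult[OF A X] AX by simp
  then show ?thesis using invertible_mat_iff_det[OF A] by auto
qed

lemma inverse_mat_commute:
  fixes A :: "'a::semiring_1 mat"
  assumes A: "A \<in> carrier_mat n n" and B: "B \<in> carrier_mat n n" and G: "G \<in> carrier_mat n n"
    and AB: "A * B = 1\<^sub>m n" and BA: "B * A = 1\<^sub>m n" and AG: "A * G = G * A"
  shows "B * G = G * B"
proof -
  have "B * G = B * G * (A * B)" using AB B G by simp
  also have "\<dots> = B * (G * A) * B" using A B G by (simp add: assoc_mult_mat[of _ n n _ n _ n])
  also have "\<dots> = (B * A) * G * B" using A B G by (simp flip: AG add: assoc_mult_mat[of _ n n _ n _ n])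
  also have "\<dots> = G * B" using BA B G by simp
  finally show ?thesis .
qed

lemma det_four_block_mat_Schur:
  fixes A :: "'a::field mat"
  assumes A: "A \<in> carrier_mat k k" and B: "B \<in> carrier_mat k m"
    and C: "C \<in> carrier_mat m k" and D: "D \<in> carrier_mat m m"
    and A': "A' \<in> carrier_mat k k" and A'A: "A' * A = 1\<^sub>m k"
  shows "det (four_block_mat A B C D) = det A * det (D - C * A' * B)"
proof -
  let ?L = "four_block_mat (1\<^sub>m k) (0\<^sub>m k m) (- (C * A')) (1\<^sub>m m)"
  have CA': "C * A' \<in> carrier_mat m k" using C A' by simp
  have L: "1\<^sub>m k \<in> carrier_mat k k" "0\<^sub>m k m \<in> carrier_mat k m" "- (C * A') \<in> carrier_mat m k"
    "1\<^sub>m m \<in> carrier_mat m m" using CA' by simp_all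
  have "?L * four_block_mat A B C D = four_block_mat A B (0\<^sub>m m k) (D - C * A' * B)"
  proof -
    have "- (C * A') * A + C = 0\<^sub>m m k"
      using A C A' A'A by (simp add: assoc_mult_mat[of C m k A' k A k])
    moreover have "- (C * A') * B + D = D - C * A' * B"
    proof -
      have "- (C * A' * B) \<in> carrier_mat m m" "dim_col (C * A') = dim_row B"
        using CA' A' B by simp_all
      then show ?thesis
        using D uminus_mult_left_mat[of "C * A'" B] minus_add_uminus_mat[of D m m "C * A' * B"]
          comm_add_mat[of "- (C * A' * B)" m m D] by simp
    qed
    ultimately show ?thesis
      using A B C D by (simp add: mult_four_block_mat[OF L A B C D])
  qed
  moreover have "det ?L = 1"
    by (simp add: det_four_block_mat_upper_right_zero[OF L(1) refl L(3,4)])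
  moreover have "D - C * A' * B \<in> carrier_mat m m" by (rule minus_carrier_mat[OF mult_carrier_mat[OF CA' B]])
  ultimately show ?thesis
    using A B C D L det_mult[of ?L "k + m" "four_block_mat A B C D"]
      det_four_block_mat_lower_left_zero[OF A B refl, of "D - C * A' * B"]
    by simp
qed

lemma invertible_diagonal_blocks_of_inverse:
  fixes A :: "'a::field mat"
  assumes A: "A \<in> carrier_mat k k" and B: "B \<in> carrier_mat k m"
    and C: "C \<in> carrier_mat m k" and D: "D \<in> carrier_mat m m"
    and P: "P \<in> carrier_mat k k" and Q: "Q \<in> carrier_mat k m"
    and R: "R \<in> carrier_mat m k" and S: "S \<in> carrier_mat m m"
    and inverse: "four_block_mat A B C D * four_block_mat P Q R S = 1\<^sub>m (k + m)"
    and RB: "R * B = 0\<^sub>m m m" and CQ: "C * Q = 0\<^sub>m m m"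
  shows "invertible_mat A \<and> invertible_mat D"
proof
  have "four_block_mat (A * P + B * R) (A * Q + B * S) (C * P + D * R) (C * Q + D * S)
      = four_block_mat (1\<^sub>m k) (0\<^sub>m k m) (0\<^sub>m m k) (1\<^sub>m m)"
    using inverse by (simp add: mult_four_block_mat[OF A B C D P Q R S])
  then have AP: "A * P + B * R = 1\<^sub>m k" and DS: "C * Q + D * S = 1\<^sub>m m"
    using four_block_mat_inject[of "A * P + B * R" k k "1\<^sub>m k" "A * Q + B * S" m "0\<^sub>m k m"
        "C * P + D * R" m "0\<^sub>m m k" "C * Q + D * S" "1\<^sub>m m"] A B C D P Q R S
    by auto
  show "invertible_mat D"
    using DS D S by (intro invertible_mat_if_right_inverse[OF D S]) (simp add: CQ)
  \<comment> \<open>\<open>A P = 1 - Z\<close> with \<open>Z = B R\<close> square-zero, so \<open>P (1 + Z)\<close> is a right inverse of \<open>A\<close>.\<close>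
  define Z where "Z = B * R"
  have Z: "Z \<in> carrier_mat k k" and AP': "A * P \<in> carrier_mat k k"
    using A B P R by (simp_all add: Z_def)
  have "Z * Z = B * ((R * B) * R)"
    using B R mult_carrier_mat[OF B R]
    by (simp add: Z_def assoc_mult_mat[of B k m R k _ k] assoc_mult_mat[of R m k B m R k])
  then have ZZ: "Z * Z = 0\<^sub>m k k" using B R by (simp add: RB)
  have APZ: "A * P * Z = Z"
  proof -
    have "Z = (A * P + Z) * Z" using AP left_mult_one_mat[OF Z] by (simp add: Z_def)
    also have "\<dots> = A * P * Z" using AP' Z by (simp add: add_mult_distrib_mat[OF AP' Z Z] ZZ)
    finally show ?thesis by simp
  qed
  have "A * (P + P * Z) = A * P + A * P * Z"
    using A P Z mult_carrier_mat[OF P Z]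
    by (simp add: mult_add_distrib_mat[OF A P] assoc_mult_mat[of A k k P k Z k])
  also have "\<dots> = 1\<^sub>m k" unfolding APZ using AP by (simp add: Z_def)
  finally have "A * (P + P * Z) = 1\<^sub>m k" .
  then show "invertible_mat A"
    using P Z by (intro invertible_mat_if_right_inverse[OF A, of "P + P * Z"]) simp_all
qed

lemma invertible_diagonal_blocks_if_commuting:
  fixes g A B C D :: "'a::field mat"
  assumes orth: "fixed_spaces_orthogonal g" and g: "g \<in> carrier_mat k k"
    and A: "A \<in> carrier_mat k k" and B: "B \<in> carrier_mat k m"
    and C: "C \<in> carrier_mat m k" and D: "D \<in> carrier_mat m m"
    and comm: "four_block_mat A B C D * four_block_mat g (0\<^sub>m k m) (0\<^sub>m m k) (1\<^sub>m m)
      = four_block_mat g (0\<^sub>m k m) (0\<^sub>m m k) (1\<^sub>m m) * four_block_mat A B C D"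
    and invertible: "invertible_mat (four_block_mat A B C D)"
  shows "invertible_mat A \<and> invertible_mat D"
proof -
  let ?M = "four_block_mat A B C D" and ?G = "four_block_mat g (0\<^sub>m k m) (0\<^sub>m m k) (1\<^sub>m m)"
  have M: "?M \<in> carrier_mat (k + m) (k + m)" and G: "?G \<in> carrier_mat (k + m) (k + m)"
    using A D g by simp_all
  obtain N where N: "N \<in> carrier_mat (k + m) (k + m)"
    and MN: "?M * N = 1\<^sub>m (k + m)" and NM: "N * ?M = 1\<^sub>m (k + m)"
    using invertible M by (elim invertible_matE)
  obtain P Q R S where split: "split_block N k k = (P, Q, R, S)" by (metis prod_cases4)
  then have P: "P \<in> carrier_mat k k" and Q: "Q \<in> carrier_mat k m"
    and R: "R \<in> carrier_mat m k" and S: "S \<in> carrier_mat m m"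
    and N_blocks: "N = four_block_mat P Q R S"
    using split_block[OF split, of m m] N by auto
  have "N * ?G = ?G * N" using inverse_mat_commute[OF M N G MN NM comm] .
  then have "g * Q = Q" "R * g = R"
    using commute_four_block_diag_one[OF g P Q R S] by (simp_all add: N_blocks)
  then have "R * B = 0\<^sub>m m m" and "C * Q = 0\<^sub>m m m"
    using fixed_spaces_orthogonal_mult_eq_0[OF orth g] commute_four_block_diag_one[OF g A B C D comm]
      B C Q R by simp_all
  then show ?thesis
    using invertible_diagonal_blocks_of_inverse[OF A B C D P Q R S] MN by (simp add: N_blocks)
qed

lemma invertible_four_block_mat_if_commuting:
  fixes g A B C D :: "'a::field mat"
  assumes orth: "fixed_spaces_orthogonal g" and g: "g \<in> carrier_mat k k"
    and A: "A \<in> carrier_mat k k" and B: "B \<in> carrier_mat k m"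
    and C: "C \<in> carrier_mat m k" and D: "D \<in> carrier_mat m m"
    and comm: "four_block_mat A B C D * four_block_mat g (0\<^sub>m k m) (0\<^sub>m m k) (1\<^sub>m m)
      = four_block_mat g (0\<^sub>m k m) (0\<^sub>m m k) (1\<^sub>m m) * four_block_mat A B C D"
    and inv_A: "invertible_mat A" and inv_D: "invertible_mat D"
  shows "invertible_mat (four_block_mat A B C D)"
proof -
  note block_comm = commute_four_block_diag_one[OF g A B C D comm]
  obtain A' where A': "A' \<in> carrier_mat k k" and AA': "A * A' = 1\<^sub>m k" and A'A: "A' * A = 1\<^sub>m k"
    using inv_A A by (elim invertible_matE)
  have "A' * g = g * A'" using inverse_mat_commute[OF A A' g AA' A'A block_comm(1)] .
  then have "g * (A' * B) = A' * B"
    using A' g B block_comm(2) by (metis assoc_mult_mat)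
  then have "C * (A' * B) = 0\<^sub>m m m"
    using fixed_spaces_orthogonal_mult_eq_0[OF orth g _ C] block_comm(3) A' B by simp
  moreover have "D - 0\<^sub>m m m = D" using D by (intro eq_matI) auto
  ultimately have "det (four_block_mat A B C D) = det A * det D"
    using det_four_block_mat_Schur[OF A B C D A' A'A] A' B C D by simp
  then show ?thesis
    using inv_A inv_D A D by (simp add: invertible_mat_iff_det[of _ "k + m"] invertible_mat_iff_det)
qed

theorem corollary2p7:
  fixes k n :: nat
    and gbar A B C D :: "'a::{finite, field} mat"
    and lam :: "'a poly \<Rightarrow> nat list"
  assumes "k \<le> n"
    and "gbar \<in> carrier_mat k k" and "invertible_mat gbar"
    and "has_type k gbar lam"
    and "\<forall>p\<in>set (lam [:-1, 1:]). p > 1"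
    and "A \<in> carrier_mat k k" and "B \<in> carrier_mat k (n - k)"
    and "C \<in> carrier_mat (n - k) k" and "D \<in> carrier_mat (n - k) (n - k)"
    and "four_block_mat A B C D * four_block_mat gbar (0\<^sub>m k (n - k)) (0\<^sub>m (n - k) k) (1\<^sub>m (n - k))
       = four_block_mat gbar (0\<^sub>m k (n - k)) (0\<^sub>m (n - k) k) (1\<^sub>m (n - k)) * four_block_mat A B C D"
  shows "invertible_mat (four_block_mat A B C D) \<longleftrightarrow> invertible_mat A \<and> invertible_mat D"
proof -
  have orth: "fixed_spaces_orthogonal gbar"
    using has_type_fixed_spaces_orthogonal[OF assms(4,5)] .
  show ?thesis
    using invertible_diagonal_blocks_if_commuting[OF orth assms(2,6-10)]
      invertible_four_block_mat_if_commuting[OF orth assms(2,6-10)] by blast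
qed

end
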